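(* Let $\mathbf{E},\mathbf{F}$ be finite-dimensional Euclidean spaces, $\mathcal{K}\subset\mathbf{E}$ a proper cone, $\mathcal{A}:\mathbf{E}\to\mathbf{F}$ linear, $b\in\mathbf{F}$, $c\in\mathbf{E}$, and consider the conic program $\min\{\langle c,x\rangle:\mathcal{A}x=b,\ x\in\mathcal{K}\}$ and its dual $\max\{\langle b,y\rangle: c-\mathcal{A}^*y\in\mathcal{K}^*\}$. Suppose strong duality holds, let $y_\star$ be a dual solution from a strong-duality pair and $s_\star=c-\mathcal{A}^*y_\star$, and set $\epsilon(x)=\langle s_\star,x\rangle$. For $x\in\mathbf{E}$ let $x_+=P_{\mathcal{K}}(x)$. Then: 1. If $s_\star=0$, then $\|P_{\mathcal{V}_{s_\star}^\perp}(x_+)\|_2=0$. 2. If $s_\star\in\mathrm{int}(\mathcal{K}^* )$, then $\|P_{\mathcal{V}_{s_\star}^\perp}(x_+)\|_2=\|x_+\|_2\le c_\star\,\epsilon(x_+)$, where $c_\star=\sup_{x\in\mathcal{K}\setminus\{0\}}\frac{1}{\langle s_\star, x/\|x\|_2\rangle}<\infty$. Moreover, if $s_\star\in\partial\mathcal{K}^*\setminus\{0\}$: 3. If $\mathcal{K}=\mathbb{R}^n_+$: $\|P_{\mathcal{V}_{s_\star}^\perp}(x_+)\|_2\le \frac{1}{s_{\min>0}}\epsilon(x_+)$, where $s_{\min>0}$ is the smallest nonzero entry of $s_\star$. 4. If $\mathcal{K}=\mathrm{SOC}^n=\{(x_{1:n},x_{n+1})\in\mathbb{R}^n\times\mathbb{R}:\|x_{1:n}\|_2\le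 x_{n+1}\}$: $\|P_{\mathcal{V}_{s_\star}^\perp}(x_+)\|_2\le\sqrt{2\sqrt2\,\frac{\|x\|_2\,\epsilon(x_+)}{\|s_\star\|_2}}$. 5. If $\mathcal{K}=\mathbb{S}^n_+$ (with trace inner product, writing $X,S_\star$ for matrices): $\|P_{\mathcal{V}_{S_\star}^\perp}(X_+)\|_F\le\frac{\epsilon(X_+)}{T}+\sqrt{2\frac{\epsilon(X_+)}{T}\|X\|_{\mathrm{op}}}$, where $T$ is the smallest nonzero eigenvalue of $S_\star$.
   Context: $\mathcal{K}^*$ is the dual cone. Strong duality: the primal and dual solution sets are nonempty, the primal solution set is compact, and there is a primal–dual solution pair $(x_\star,y_\star)$ with $\langle c,x_\star\rangle=\langle b,y_\star\rangle$. The complementary face is $\mathcal{F}_{s_\star}=\{x\in\mathcal{K}:\langle x,s_\star\rangle=0\}$ and the complementary space is $\mathcal{V}_{s_\star}=\mathrm{aff}(\mathcal{F}_{s_\star})$, a linear subspace; $\mathcal{V}_{s_\star}^\perp$ is its orthogonal complement and $P_C$ denotes Euclidean projection onto $C$. $\mathbb{R}^n$ carries the dot product and $\mathbb{S}^n$ (symmetric $n\times n$ matrices) the trace inner product; $\|\cdot\|_F$ and $\|\cdot\|_{\mathrm{op}}$ are Frobenius and operator norms. *)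

theory Defs
  imports "HOL-Analysis.Analysis"
begin

text \<open>The finite-dimensional Euclidean space E is modelled as a linear subspace E of an
  ambient Euclidean type 'a with the induced inner product (for R^n and R^n x R we take
  E = UNIV; for S^n we take the symmetric matrices inside real^'n^'n, whose inner product
  is the trace inner product).\<close>

definition lin_on :: "'a::real_vector set \<Rightarrow> ('a \<Rightarrow> 'b::real_vector) \<Rightarrow> bool" where
  "lin_on E A \<longleftrightarrow> (\<forall>x\<in>E. \<forall>y\<in>E. A (x + y) = A x + A y) \<and> (\<forall>x\<in>E. \<forall>r. A (r *\<^sub>R x) = r *\<^sub>R A x)"

definition adjE :: "'a::real_inner set \<Rightarrow> ('a \<Rightarrow> 'b::real_inner) \<Rightarrow> 'b \<Rightarrow> 'a" where
  "adjE E A y = (THE z. z \<in> E \<and> (\<forall>x\<in>E. inner (A x) y = inner x z))"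

definition int_in :: "'a::metric_space set \<Rightarrow> 'a set \<Rightarrow> 'a set" where
  "int_in E S = {s \<in> S. \<exists>e>0. \<forall>t\<in>E. dist t s < e \<longrightarrow> t \<in> S}"

definition bd_in :: "'a::metric_space set \<Rightarrow> 'a set \<Rightarrow> 'a set" where
  "bd_in E S = closure S - int_in E S"

definition dual_cone :: "'a::real_inner set \<Rightarrow> 'a set \<Rightarrow> 'a set" where
  "dual_cone E K = {s \<in> E. \<forall>x\<in>K. 0 \<le> inner s x}"

definition proper_cone :: "'a::real_normed_vector set \<Rightarrow> 'a set \<Rightarrow> bool" where
  "proper_cone E K \<longleftrightarrow> K \<subseteq> E \<and> closed K \<and> convex K \<and> cone K
     \<and> (\<forall>x. x \<in> K \<and> - x \<in> K \<longrightarrow> x = 0) \<and> int_in E K \<noteq> {}"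

definition primal_feas :: "'a set \<Rightarrow> ('a \<Rightarrow> 'b) \<Rightarrow> 'b \<Rightarrow> 'a set" where
  "primal_feas K A b = {x \<in> K. A x = b}"

definition primal_sol :: "'a::real_inner set \<Rightarrow> ('a \<Rightarrow> 'b) \<Rightarrow> 'b \<Rightarrow> 'a \<Rightarrow> 'a set" where
  "primal_sol K A b c = {x \<in> primal_feas K A b. \<forall>z \<in> primal_feas K A b. inner c x \<le> inner c z}"

definition dual_feas :: "'a::real_inner set \<Rightarrow> 'a set \<Rightarrow> ('a \<Rightarrow> 'b::real_inner) \<Rightarrow> 'a \<Rightarrow> 'b set" where
  "dual_feas E K A c = {y. c - adjE E A y \<in> dual_cone E K}"

definition dual_sol :: "'a::real_inner set \<Rightarrow> 'a set \<Rightarrow> ('a \<Rightarrow> 'b::real_inner) \<Rightarrow> 'b \<Rightarrow> 'a \<Rightarrow> 'b set" where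
  "dual_sol E K A b c = {y \<in> dual_feas E K A c. \<forall>w \<in> dual_feas E K A c. inner b w \<le> inner b y}"

definition conic_setting :: "'a::euclidean_space set \<Rightarrow> 'a set \<Rightarrow> ('a \<Rightarrow> 'b::euclidean_space) \<Rightarrow> 'b \<Rightarrow> 'a \<Rightarrow> 'b \<Rightarrow> bool" where
  "conic_setting E K A b c ystar \<longleftrightarrow>
     subspace E \<and> proper_cone E K \<and> lin_on E A \<and> c \<in> E
     \<and> primal_sol K A b c \<noteq> {} \<and> dual_sol E K A b c \<noteq> {} \<and> compact (primal_sol K A b c)
     \<and> (\<exists>xs. xs \<in> primal_sol K A b c \<and> ystar \<in> dual_sol E K A b c \<and> inner c xs = inner b ystar)"

definition compl_face :: "'a::real_inner set \<Rightarrow> 'a \<Rightarrow> 'a set" where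
  "compl_face K s = {x \<in> K. inner x s = 0}"

definition compl_space :: "'a::real_inner set \<Rightarrow> 'a \<Rightarrow> 'a set" where
  "compl_space K s = affine hull (compl_face K s)"

definition orth_in :: "'a::real_inner set \<Rightarrow> 'a set \<Rightarrow> 'a set" where
  "orth_in E V = {v \<in> E. \<forall>w\<in>V. inner v w = 0}"

definition eigval :: "real^'n^'n \<Rightarrow> real \<Rightarrow> bool" where
  "eigval M l \<longleftrightarrow> (\<exists>v. v \<noteq> 0 \<and> M *v v = l *\<^sub>R v)"

end

theory Submission
  imports Defs
begin

text \<open>Let s be the optimal dual slack and P the orthogonal projection onto the orthogonal
  complement of the complementary space. P vanishes on the span of the complementary face F
  and does not increase norms, so every w in span F gives |P x_+| <= |x_+ - w|; each case is
  a choice of w. If s = 0 then F = K contains x_+ itself. If s is interior to the dual cone,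
  it is bounded below on the unit vectors of K, so F = {0} and P fixes x_+. For the orthant,
  w keeps the coordinates of x_+ where s vanishes. For the second-order cone, s = (u, |u|)
  lies on the boundary, the ray through (-u/|u|, 1) lies in F, and w is the component of x_+
  along it. For the positive semidefinite cone, F contains v v^T for every kernel vector v
  of S; in an eigenbasis of S, Cauchy-Schwarz bounds |P X_+|^2 by twice the squared entries
  of X_+ outside the kernel block, and lambda_max(X_+) <= |X|_op turns these into
  2 |X|_op eps / T.\<close>

section \<open>Projections onto closed convex cones\<close>

lemma
  fixes C :: "'a::euclidean_space set"
  assumes "closed C" "convex C" "cone C" "C \<noteq> {}"
  shows closest_point_cone_orthogonal: "inner (y - closest_point C y) (closest_point C y) = 0"
    and closest_point_cone_polar: "z \<in> C \<Longrightarrow> inner (y - closest_point C y) z \<le> 0"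
    and norm_closest_point_cone_le: "norm (closest_point C y) \<le> norm y"
proof -
  let ?p = "closest_point C y"
  have pC: "?p \<in> C" using closest_point_in_set assms(1,4) .
  have "0 \<in> C" and "2 *\<^sub>R ?p \<in> C"
    using assms(3,4) pC cone_contains_0 by (auto intro: mem_cone)
  then have "inner (y - ?p) (0 - ?p) \<le> 0" and "inner (y - ?p) (2 *\<^sub>R ?p - ?p) \<le> 0"
    using closest_point_dot assms(1,2) by blast+
  then show orth: "inner (y - ?p) ?p = 0"
    by (simp add: inner_diff_right)
  show "inner (y - ?p) z \<le> 0" if "z \<in> C"
  proof -
    have "(1/2) *\<^sub>R z + (1/2) *\<^sub>R ?p \<in> C"
      using convexD[OF assms(2) that pC] by simp
    then have "z + ?p \<in> C"
      using mem_cone[OF assms(3), of _ 2] by (fastforce simp: scaleR_add_right)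
    from closest_point_dot[OF assms(2,1) this, of y] show ?thesis by simp
  qed
  have "inner y y = inner ?p ?p + inner (y - ?p) (y - ?p)"
    using orth by (simp add: algebra_simps inner_commute)
  then show "norm ?p \<le> norm y"
    by (simp add: norm_le)
qed

lemma
  fixes U :: "'a::euclidean_space set"
  assumes "subspace U"
  shows closest_point_subspace_mem: "closest_point U y \<in> U"
    and closest_point_subspace_orthogonal: "inner (y - closest_point U y) (closest_point U y) = 0"
proof -
  have "closed U" "convex U" "cone U" "U \<noteq> {}"
    using assms closed_subspace subspace_imp_convex subspace_imp_cone subspace_0 by auto
  then show "closest_point U y \<in> U" "inner (y - closest_point U y) (closest_point U y) = 0"
    by (simp_all add: closest_point_in_set closest_point_cone_orthogonal)
qed

lemma norm_closest_point_subspace_le: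
  fixes U :: "'a::euclidean_space set"
  assumes "subspace U" and perp: "\<And>u. u \<in> U \<Longrightarrow> inner u w = 0"
  shows "norm (closest_point U y) \<le> norm (y - w)"
proof -
  let ?p = "closest_point U y"
  have "norm ?p ^ 2 = inner (y - w) ?p"
    using closest_point_subspace_orthogonal[OF assms(1)] perp[OF closest_point_subspace_mem[OF assms(1)]]
    by (simp add: power2_norm_eq_inner inner_diff_left inner_diff_right inner_commute)
  also have "\<dots> \<le> norm (y - w) * norm ?p"
    by (rule norm_cauchy_schwarz)
  finally show ?thesis
    by (cases "?p = 0") (simp_all add: power2_eq_square)
qed

section \<open>The complementary face\<close>

lemma subspace_orth_in: "subspace E \<Longrightarrow> subspace (orth_in E V)"
  unfolding orth_in_def subspace_def by (auto simp: inner_add_left)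

lemma norm_proj_orth_compl_space_le:
  fixes E :: "'a::euclidean_space set"
  assumes "subspace E" and "w \<in> span (compl_face K s)"
  shows "norm (closest_point (orth_in E (compl_space K s)) y) \<le> norm (y - w)"
proof (rule norm_closest_point_subspace_le[OF subspace_orth_in[OF assms(1)]])
  fix u assume u: "u \<in> orth_in E (compl_space K s)"
  have "orthogonal u f" if "f \<in> compl_face K s" for f
    using u that hull_inc[of f "compl_face K s" affine]
    unfolding orth_in_def compl_space_def orthogonal_def by auto
  then show "inner u w = 0"
    using orthogonal_to_span[OF assms(2)] by (simp add: orthogonal_def)
qed

lemma
  assumes "conic_setting E K A b c ystar"
  shows conic_setting_subspace: "subspace E"
    and conic_setting_proper_cone: "proper_cone E K"
    and conic_setting_slack_in_dual_cone: "c - adjE E A ystar \<in> dual_cone E K"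
  using assms unfolding conic_setting_def dual_sol_def dual_feas_def by auto

lemma proper_cone_subset: "proper_cone E K \<Longrightarrow> K \<subseteq> E"
  unfolding proper_cone_def by simp

lemma
  assumes "conic_setting E K A b c ystar"
  shows conic_setting_closest_point_mem: "closest_point K x \<in> K"
    and conic_setting_norm_closest_point_le: "norm (closest_point K x) \<le> norm x"
proof -
  have "closed K" "convex K" "cone K" "K \<noteq> {}"
    using conic_setting_proper_cone[OF assms] unfolding proper_cone_def int_in_def by auto
  then show "closest_point K x \<in> K" "norm (closest_point K x) \<le> norm x"
    by (simp_all add: closest_point_in_set norm_closest_point_cone_le)
qed

lemma norm_proj_orth_compl_space_zero_slack:
  fixes E :: "'a::euclidean_space set"
  assumes "subspace E" "y \<in> K"
  shows "norm (closest_point (orth_in E (compl_space K 0)) y) = 0"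
proof -
  have "y \<in> span (compl_face K 0)"
    using assms(2) unfolding compl_face_def by (simp add: span_base)
  from norm_proj_orth_compl_space_le[OF assms(1) this, of y] show ?thesis
    by simp
qed

lemma int_dual_cone_uniformly_positive:
  fixes E :: "'a::real_inner set"
  assumes "subspace E" "K \<subseteq> E" "s \<in> int_in E (dual_cone E K)"
  obtains e where "e > 0" "\<And>z. z \<in> K \<Longrightarrow> e * norm z \<le> inner s z"
proof -
  obtain r where r: "r > 0" "\<And>t. t \<in> E \<Longrightarrow> dist t s < r \<Longrightarrow> t \<in> dual_cone E K"
    using assms(3) unfolding int_in_def by auto
  have sE: "s \<in> E"
    using assms(3) unfolding int_in_def dual_cone_def by auto
  have "r / 2 * norm z \<le> inner s z" if z: "z \<in> K" for z
  proof (cases "z = 0")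
    case False
    define t where "t = s - (r / 2 / norm z) *\<^sub>R z"
    have "t \<in> E"
      unfolding t_def using assms(1,2) sE z by (auto intro: subspace_diff subspace_scale)
    moreover have "dist t s < r"
      using False r(1) by (simp add: t_def dist_norm)
    ultimately have "0 \<le> inner t z"
      using r(2) z unfolding dual_cone_def by auto
    then show ?thesis
      using False by (simp add: t_def inner_diff_left power2_norm_eq_inner[symmetric] power2_eq_square)
  qed simp
  with r(1) show ?thesis
    using that[of "r / 2"] by simp
qed

lemma int_dual_cone_norm_le_Sup:
  fixes E :: "'a::real_inner set"
  assumes "subspace E" "K \<subseteq> E" "s \<in> int_in E (dual_cone E K)"
  defines "Q \<equiv> {1 / inner s (z /\<^sub>R norm z) | z. z \<in> K - {0}}"
  shows "bdd_above Q" and "y \<in> K \<Longrightarrow> norm y \<le> Sup Q * inner s y"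
proof -
  obtain e where e: "e > 0" "\<And>z. z \<in> K \<Longrightarrow> e * norm z \<le> inner s z"
    using int_dual_cone_uniformly_positive[OF assms(1-3)] by blast
  have pos: "e \<le> inner s (z /\<^sub>R norm z)" if "z \<in> K" "z \<noteq> 0" for z
    using e(2)[OF that(1)] that(2) by (simp add: field_simps)
  show bdd: "bdd_above Q"
  proof (rule bdd_aboveI)
    fix q assume "q \<in> Q"
    then obtain z where "z \<in> K" "z \<noteq> 0" "q = 1 / inner s (z /\<^sub>R norm z)"
      unfolding Q_def by auto
    then show "q \<le> 1 / e"
      using pos e(1) by (simp add: frac_le)
  qed
  show "norm y \<le> Sup Q * inner s y" if y: "y \<in> K"
  proof (cases "y = 0")
    case False
    have "1 / inner s (y /\<^sub>R norm y) \<in> Q"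
      unfolding Q_def using y False by blast
    then have "1 / inner s (y /\<^sub>R norm y) \<le> Sup Q"
      using bdd by (rule cSup_upper)
    moreover have "0 < e * norm y"
      using e(1) False by simp
    then have "0 < inner s y"
      using e(2)[OF y] by linarith
    ultimately show ?thesis
      using False by (simp add: field_simps)
  qed simp
qed

lemma orth_in_compl_space_int_dual_cone:
  fixes E :: "'a::real_inner set"
  assumes "subspace E" "K \<subseteq> E" "s \<in> int_in E (dual_cone E K)"
  shows "orth_in E (compl_space K s) = E"
proof -
  obtain e where e: "e > 0" "\<And>z. z \<in> K \<Longrightarrow> e * norm z \<le> inner s z"
    using int_dual_cone_uniformly_positive[OF assms] by blast
  have "compl_face K s \<subseteq> {0}"
  proof
    fix z assume "z \<in> compl_face K s"
    then have "e * norm z \<le> 0"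
      using e(2)[of z] unfolding compl_face_def by (simp add: inner_commute)
    then show "z \<in> {0}"
      using e(1) by (simp add: mult_le_0_iff)
  qed
  then have "compl_space K s \<subseteq> {0}"
    unfolding compl_space_def by (rule hull_minimal) simp
  then show ?thesis
    unfolding orth_in_def by auto
qed

lemma norm_proj_orth_compl_space_int_dual_cone:
  fixes E :: "'a::euclidean_space set"
  assumes "subspace E" "K \<subseteq> E" "s \<in> int_in E (dual_cone E K)" "y \<in> K"
  shows "norm (closest_point (orth_in E (compl_space K s)) y) = norm y"
  using assms by (simp add: orth_in_compl_space_int_dual_cone closest_point_self subsetD)

section \<open>The nonnegative orthant\<close>

definition nonneg_orthant :: "(real^'n) set" where
  "nonneg_orthant = {v. \<forall>i. 0 \<le> v $ i}"

lemma dual_cone_nonneg_orthant_nonneg: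
  assumes "s \<in> dual_cone UNIV nonneg_orthant"
  shows "0 \<le> s $ i"
proof -
  have "axis i 1 \<in> nonneg_orthant"
    unfolding nonneg_orthant_def by (simp add: axis_def)
  then show ?thesis
    using assms unfolding dual_cone_def by (auto simp: inner_axis)
qed

lemma norm_proj_orth_compl_space_orthant_le:
  fixes s y :: "real^'n"
  assumes s: "s \<in> dual_cone UNIV nonneg_orthant" "s \<noteq> 0" and y: "y \<in> nonneg_orthant"
  shows "norm (closest_point (orth_in UNIV (compl_space nonneg_orthant s)) y)
           \<le> (1 / Min {s $ i | i. s $ i \<noteq> 0}) * inner s y"
proof -
  define m where "m = Min {s $ i | i. s $ i \<noteq> 0}"
  have "m \<in> {s $ i | i. s $ i \<noteq> 0}"
    unfolding m_def using s(2) by (intro Min_in) (auto simp: vec_eq_iff)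
  then have m0: "m > 0"
    using dual_cone_nonneg_orthant_nonneg[OF s(1)] by (force simp: less_le)
  have m_le: "m \<le> s $ i" if "s $ i \<noteq> 0" for i
    unfolding m_def using that by (intro Min_le) auto
  have y0: "0 \<le> y $ i" for i
    using y unfolding nonneg_orthant_def by auto
  define w where "w = (\<chi> i. if s $ i = 0 then y $ i else 0)"
  have "w \<in> compl_face nonneg_orthant s"
    using y0 unfolding compl_face_def nonneg_orthant_def w_def inner_vec_def
    by (auto intro: sum.neutral)
  then have "norm (closest_point (orth_in UNIV (compl_space nonneg_orthant s)) y) \<le> norm (y - w)"
    by (intro norm_proj_orth_compl_space_le subspace_UNIV span_base)
  also have "\<dots> \<le> (\<Sum>i\<in>UNIV. \<bar>(y - w) $ i\<bar>)"
    by (rule norm_le_l1_cart)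
  also have "\<dots> \<le> (\<Sum>i\<in>UNIV. (1 / m) * (s $ i * y $ i))"
  proof (rule sum_mono)
    fix i
    have "m * y $ i \<le> s $ i * y $ i" if "s $ i \<noteq> 0"
      using m_le[OF that] y0 by (rule mult_right_mono)
    then show "\<bar>(y - w) $ i\<bar> \<le> (1 / m) * (s $ i * y $ i)"
      using y0[of i] m0 by (simp add: w_def field_simps)
  qed
  also have "\<dots> = (1 / m) * inner s y"
    by (simp add: inner_vec_def sum_distrib_left)
  finally show ?thesis
    unfolding m_def .
qed

section \<open>The second-order cone\<close>

definition second_order_cone :: "('a::real_normed_vector \<times> real) set" where
  "second_order_cone = {(u, t). norm u \<le> t}"

lemma int_in_UNIV: "int_in UNIV S = interior S"
proof -
  have "x \<in> int_in UNIV S \<longleftrightarrow> (\<exists>e>0. ball x e \<subseteq> S)" for x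
    unfolding int_in_def ball_def by (force simp: dist_commute)
  then show ?thesis
    by (auto simp: mem_interior)
qed

lemma dual_cone_second_order_cone:
  "dual_cone UNIV second_order_cone = (second_order_cone :: ('a::real_inner \<times> real) set)"
proof (intro set_eqI iffI)
  fix s :: "'a \<times> real"
  assume s: "s \<in> dual_cone UNIV second_order_cone"
  obtain w \<tau> where [simp]: "s = (w, \<tau>)"
    by fastforce
  have "(- w, norm w) \<in> second_order_cone" "(0, 1) \<in> second_order_cone"
    unfolding second_order_cone_def by auto
  then have "0 \<le> norm w * (\<tau> - norm w)" "0 \<le> \<tau>"
    using s unfolding dual_cone_def
    by (auto simp: algebra_simps power2_norm_eq_inner[symmetric] power2_eq_square)
  then show "s \<in> second_order_cone"
    unfolding second_order_cone_def by (cases "w = 0") (auto simp: zero_le_mult_iff)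
next
  fix s :: "'a \<times> real"
  assume "s \<in> second_order_cone"
  then obtain w \<tau> where [simp]: "s = (w, \<tau>)" and w: "norm w \<le> \<tau>"
    unfolding second_order_cone_def by auto
  have "0 \<le> inner s (u, t)" if "norm u \<le> t" for u t
  proof -
    have "- inner w u \<le> norm w * norm u"
      using norm_cauchy_schwarz[of "- w" u] by simp
    also have "\<dots> \<le> \<tau> * t"
      using w that by (intro mult_mono) (auto intro: order_trans[OF norm_ge_zero])
    finally show ?thesis
      by simp
  qed
  then show "s \<in> dual_cone UNIV second_order_cone"
    unfolding dual_cone_def second_order_cone_def by auto
qed

lemma second_order_cone_boundary:
  fixes w :: "'a::real_normed_vector"
  assumes "(w, \<tau>) \<in> second_order_cone" "(w, \<tau>) \<notin> interior second_order_cone"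
  shows "\<tau> = norm w"
proof (rule ccontr)
  assume "\<tau> \<noteq> norm w"
  with assms(1) have "(w, \<tau>) \<in> {z. norm (fst z) < snd z}"
    unfolding second_order_cone_def by auto
  moreover have "open {z :: 'a \<times> real. norm (fst z) < snd z}"
    by (intro open_Collect_less continuous_intros)
  moreover have "{z :: 'a \<times> real. norm (fst z) < snd z} \<subseteq> second_order_cone"
    unfolding second_order_cone_def by auto
  ultimately show False
    using assms(2) interior_maximal by blast
qed

lemma norm_proj_orth_compl_space_soc_le:
  fixes s y :: "'a::euclidean_space \<times> real"
  assumes s: "s \<in> dual_cone UNIV second_order_cone"
      "s \<notin> int_in UNIV (dual_cone UNIV second_order_cone)" "s \<noteq> 0"
    and y: "y \<in> second_order_cone" "norm y \<le> r"
  shows "norm (closest_point (orth_in UNIV (compl_space second_order_cone s)) y)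
           \<le> sqrt (2 * sqrt 2 * (r * inner s y) / norm s)"
proof -
  obtain w \<tau> where s_eq: "s = (w, \<tau>)"
    by fastforce
  have \<tau>: "\<tau> = norm w"
    using s(1,2) unfolding dual_cone_second_order_cone int_in_UNIV s_eq
    by (rule second_order_cone_boundary)
  with s(3) have w0: "norm w > 0"
    by (auto simp: s_eq zero_prod_def)
  obtain u t where y_eq: "y = (u, t)"
    by fastforce
  have ut: "norm u \<le> t"
    using y(1) unfolding y_eq second_order_cone_def by simp
  have tr: "t \<le> r"
  proof -
    have "t \<le> norm y"
      using real_sqrt_sum_squares_ge2[of "norm u" t] by (simp add: y_eq norm_Pair)
    with y(2) show ?thesis
      by linarith
  qed
  define d where "d = (- (1 / norm w) *\<^sub>R w, 1::real)"
  have "d \<in> compl_face second_order_cone s"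
    unfolding compl_face_def second_order_cone_def d_def s_eq \<tau> using w0
    by (simp add: power2_norm_eq_inner[symmetric] power2_eq_square)
  then have "norm (closest_point (orth_in UNIV (compl_space second_order_cone s)) y)
               \<le> norm (y - (inner y d / 2) *\<^sub>R d)"
    by (intro norm_proj_orth_compl_space_le subspace_UNIV span_mul span_base)
  also have "\<dots> \<le> sqrt (2 * sqrt 2 * (r * inner s y) / norm s)"
  proof -
    define a where "a = inner u w / norm w"
    have a: "\<bar>a\<bar> \<le> norm u"
      using Cauchy_Schwarz_ineq2[of u w] w0 by (simp add: a_def abs_div divide_le_eq)
    have yd: "inner y d = t - a"
      unfolding y_eq d_def a_def by (simp add: inner_commute)
    have dd: "inner d d = 2"
      unfolding d_def inner_Pair using w0 by (simp add: dot_square_norm power2_eq_square)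
    have yy: "inner y y = norm u ^ 2 + t ^ 2"
      unfolding y_eq inner_Pair by (simp add: dot_square_norm power2_eq_square)
    have "norm (y - (inner y d / 2) *\<^sub>R d) ^ 2 = inner y y - (inner y d) ^ 2 / 2"
      unfolding power2_norm_eq_inner
      by (simp add: inner_diff_left inner_diff_right inner_commute[of d y] dd power2_eq_square)
    also have "\<dots> = norm u ^ 2 + t ^ 2 - (t - a) ^ 2 / 2"
      unfolding yy yd ..
    also have "\<dots> \<le> 2 * t * (a + t)"
    proof -
      have "norm u ^ 2 \<le> t ^ 2"
        using ut by (simp add: power_mono)
      moreover have "2 * t * (a + t) - (norm u ^ 2 + t ^ 2 - (t - a) ^ 2 / 2)
                       = (t ^ 2 - norm u ^ 2) + (a + t) ^ 2 / 2"
        by (simp add: power2_eq_square field_simps)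
      ultimately show ?thesis
        using zero_le_power2[of "a + t"] by linarith
    qed
    also have "\<dots> \<le> 2 * r * (a + t)"
      using tr a ut by (intro mult_right_mono) auto
    also have "\<dots> = 2 * sqrt 2 * (r * inner s y) / norm s"
    proof -
      have "inner s y = norm w * (a + t)"
        unfolding s_eq y_eq \<tau> a_def using w0 by (simp add: inner_commute algebra_simps)
      moreover have "norm s = sqrt 2 * norm w"
        unfolding s_eq \<tau> norm_Pair by (simp add: real_sqrt_mult)
      ultimately show ?thesis
        using w0 by simp
    qed
    finally show ?thesis
      by (simp add: real_le_rsqrt)
  qed
  finally show ?thesis .
qed

section \<open>Symmetric matrices\<close>

definition outer_prod :: "real^'n \<Rightarrow> real^'n^'n" where
  "outer_prod v = (\<chi> i j. v $ i * v $ j)"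

lemma outer_prod_mult_vec: "outer_prod v *v w = (v \<bullet> w) *\<^sub>R v"
  by (simp add: vec_eq_iff outer_prod_def matrix_vector_mult_def inner_vec_def
      sum_distrib_left mult_ac)

lemma transpose_outer_prod: "transpose (outer_prod v) = outer_prod v"
  by (simp add: vec_eq_iff outer_prod_def transpose_def mult.commute)

lemma inner_outer_prod: "M \<bullet> outer_prod v = v \<bullet> (M *v v)"
  by (simp add: outer_prod_def inner_vec_def matrix_vector_mult_def sum_distrib_left mult_ac)

lemma symmetric_inner_mult_vec:
  fixes M :: "real^'n^'n"
  assumes "transpose M = M"
  shows "u \<bullet> (M *v v) = (M *v u) \<bullet> v"
  by (metis assms dot_lmul_matrix transpose_matrix_vector)

lemma quadratic_form_add_scaleR:
  fixes M :: "real^'n^'n"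
  assumes "transpose M = M"
  shows "(u + t *\<^sub>R v) \<bullet> (M *v (u + t *\<^sub>R v))
           = u \<bullet> (M *v u) + 2 * (u \<bullet> (M *v v)) * t + (v \<bullet> (M *v v)) * t ^ 2"
proof -
  have "v \<bullet> (M *v u) = u \<bullet> (M *v v)"
    using symmetric_inner_mult_vec[OF assms, of u v] by (simp add: inner_commute)
  then show ?thesis
    by (simp add: matrix_vector_right_distrib matrix_vector_mult_scaleR inner_add_left
        inner_add_right algebra_simps power2_eq_square)
qed

lemma nonneg_quadratic_discriminant:
  fixes a b c :: real
  assumes "0 \<le> c" and nonneg: "\<And>t. 0 \<le> a + 2 * b * t + c * t ^ 2"
  shows "b ^ 2 \<le> a * c"
proof (cases "c = 0")
  case True
  have "b = 0"
  proof (rule ccontr)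
    assume "b \<noteq> 0"
    then have "a + 2 * b * (- (a + 1) / (2 * b)) + c * (- (a + 1) / (2 * b)) ^ 2 = -1"
      using True by (simp add: field_simps)
    then show False
      using nonneg[of "- (a + 1) / (2 * b)"] by simp
  qed
  with True show ?thesis
    by simp
next
  case False
  with assms(1) have "c > 0"
    by simp
  moreover have "a + 2 * b * (- b / c) + c * (- b / c) ^ 2 = a - b ^ 2 / c"
    using \<open>c > 0\<close> by (simp add: field_simps power2_eq_square)
  ultimately have "0 \<le> a - b ^ 2 / c"
    using nonneg[of "- b / c"] by simp
  with \<open>c > 0\<close> show ?thesis
    by (simp add: pos_divide_le_eq)
qed

lemma psd_on_subspace_cauchy_schwarz:
  fixes M :: "real^'n^'n"
  assumes "transpose M = M" "subspace W" "\<And>x. x \<in> W \<Longrightarrow> 0 \<le> x \<bullet> (M *v x)"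
    and "u \<in> W" "v \<in> W"
  shows "(u \<bullet> (M *v v)) ^ 2 \<le> (u \<bullet> (M *v u)) * (v \<bullet> (M *v v))"
proof (rule nonneg_quadratic_discriminant)
  show "0 \<le> v \<bullet> (M *v v)"
    using assms(3,5) .
  fix t
  have "u + t *\<^sub>R v \<in> W"
    using assms(2,4,5) by (simp add: subspace_add subspace_scale)
  then show "0 \<le> u \<bullet> (M *v u) + 2 * (u \<bullet> (M *v v)) * t + (v \<bullet> (M *v v)) * t ^ 2"
    using assms(3) unfolding quadratic_form_add_scaleR[OF assms(1), symmetric] by blast
qed

text \<open>For N = mu I - A, which is positive semidefinite on W and satisfies g . N g = 0,
  Cauchy-Schwarz gives |N g|^4 <= ((N g) . N (N g)) (g . N g) = 0.\<close>
lemma symmetric_max_eigenvector: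
  fixes A :: "real^'n^'n"
  assumes sym: "transpose A = A" and W: "subspace W" and inv: "\<And>w. w \<in> W \<Longrightarrow> A *v w \<in> W"
    and ne: "W \<noteq> {0}"
  obtains g where "g \<in> W" "norm g = 1" "A *v g = (g \<bullet> (A *v g)) *\<^sub>R g"
    "\<And>v. v \<in> W \<Longrightarrow> v \<bullet> (A *v v) \<le> (g \<bullet> (A *v g)) * norm v ^ 2"
proof -
  define C where "C = W \<inter> sphere 0 1"
  have "compact C"
    unfolding C_def using closed_subspace[OF W] compact_sphere by blast
  obtain w where "w \<in> W" "w \<noteq> 0"
    using ne subspace_0[OF W] by blast
  then have "w /\<^sub>R norm w \<in> C"
    unfolding C_def using W by (simp add: subspace_scale)
  then have "C \<noteq> {}"
    by blast
  have "continuous_on C (\<lambda>v. v \<bullet> (A *v v))"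
    by (intro continuous_intros linear_continuous_on matrix_vector_mul_bounded_linear)
  then obtain g where gC: "g \<in> C" and gmax: "\<And>y. y \<in> C \<Longrightarrow> y \<bullet> (A *v y) \<le> g \<bullet> (A *v g)"
    using continuous_attains_sup[OF \<open>compact C\<close> \<open>C \<noteq> {}\<close>] by blast
  define \<mu> where "\<mu> = g \<bullet> (A *v g)"
  have gW: "g \<in> W" and g1: "norm g = 1"
    using gC unfolding C_def by auto
  have bound: "v \<bullet> (A *v v) \<le> \<mu> * norm v ^ 2" if v: "v \<in> W" for v
  proof (cases "v = 0")
    case False
    have "v /\<^sub>R norm v \<in> C"
      unfolding C_def using v False W by (simp add: subspace_scale)
    then have "(v /\<^sub>R norm v) \<bullet> (A *v (v /\<^sub>R norm v)) \<le> \<mu>"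
      unfolding \<mu>_def by (rule gmax)
    then have "(v \<bullet> (A *v v)) / norm v ^ 2 \<le> \<mu>"
      by (simp add: matrix_vector_mult_scaleR power2_eq_square divide_inverse mult_ac)
    then show ?thesis
      using False by (simp add: divide_le_eq mult.commute)
  qed simp
  define N where "N = \<mu> *\<^sub>R mat 1 - A"
  have N_sym: "transpose N = N"
    unfolding N_def using sym by (simp add: vec_eq_iff transpose_def mat_def)
  have N_mult: "N *v v = \<mu> *\<^sub>R v - A *v v" for v
    unfolding N_def by (simp add: matrix_vector_mult_diff_rdistrib scaleR_matrix_vector_assoc[symmetric])
  have N_psd: "0 \<le> v \<bullet> (N *v v)" if "v \<in> W" for v
    using bound[OF that] by (simp add: N_mult inner_diff_right dot_square_norm)
  define r where "r = N *v g"
  have rW: "r \<in> W"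
    unfolding r_def N_mult using gW inv W by (simp add: subspace_diff subspace_scale)
  have "g \<bullet> (N *v g) = 0"
    unfolding N_mult \<mu>_def using g1 by (simp add: inner_diff_right dot_square_norm)
  then have "(r \<bullet> (N *v g)) ^ 2 \<le> 0"
    using psd_on_subspace_cauchy_schwarz[OF N_sym W N_psd rW gW] by simp
  then have "r = 0"
    unfolding r_def by simp
  then have "A *v g = \<mu> *\<^sub>R g"
    unfolding r_def N_mult by simp
  with gW g1 bound show ?thesis
    unfolding \<mu>_def by (intro that) auto
qed

lemma symmetric_orthonormal_eigenbasis_subspace:
  fixes A :: "real^'n^'n"
  assumes sym: "transpose A = A" and "subspace W" "\<And>w. w \<in> W \<Longrightarrow> A *v w \<in> W"
  shows "\<exists>B. B \<subseteq> W \<and> pairwise orthogonal B \<and> (\<forall>b\<in>B. norm b = 1) \<and> span B = W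
           \<and> (\<forall>b\<in>B. A *v b = (b \<bullet> (A *v b)) *\<^sub>R b)"
  using assms(2,3)
proof (induct "dim W" arbitrary: W rule: less_induct)
  case less
  note W = less.prems(1) and inv = less.prems(2)
  show ?case
  proof (cases "W = {0}")
    case True
    then show ?thesis
      by (intro exI[of _ "{}"]) auto
  next
    case False
    obtain g where gW: "g \<in> W" and g1: "norm g = 1" and g_eig: "A *v g = (g \<bullet> (A *v g)) *\<^sub>R g"
      using symmetric_max_eigenvector[OF sym W inv False] by blast
    define W' where "W' = {w \<in> W. w \<bullet> g = 0}"
    have W': "subspace W'"
      unfolding W'_def using W by (auto simp: subspace_def inner_add_left)
    have inv': "A *v w \<in> W'" if "w \<in> W'" for w
    proof -
      have "(A *v w) \<bullet> g = w \<bullet> (A *v g)"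
        using symmetric_inner_mult_vec[OF sym, of w g] by simp
      also have "\<dots> = 0"
        using that unfolding W'_def by (subst g_eig) simp
      finally show ?thesis
        using that inv unfolding W'_def by auto
    qed
    have "g \<notin> W'"
      unfolding W'_def using g1 by (simp add: dot_square_norm)
    then have "W' \<subset> W"
      unfolding W'_def using gW by blast
    moreover have "span W' = W'" "span W = W"
      using W W' by (simp_all add: span_eq_iff)
    ultimately have "dim W' < dim W"
      by (metis dim_psubset)
    then obtain B' where B': "B' \<subseteq> W'" "pairwise orthogonal B'" "\<forall>b\<in>B'. norm b = 1"
      "span B' = W'" "\<forall>b\<in>B'. A *v b = (b \<bullet> (A *v b)) *\<^sub>R b"
      using less.hyps W' inv' by blast
    have "pairwise orthogonal (insert g B')"
      using B'(1,2) unfolding W'_def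
      by (intro pairwise_orthogonal_insert) (auto simp: orthogonal_def inner_commute)
    moreover have "span (insert g B') = W"
    proof
      show "span (insert g B') \<subseteq> W"
        using B'(1) gW W \<open>W' \<subset> W\<close> by (simp add: span_minimal)
      show "W \<subseteq> span (insert g B')"
      proof
        fix w assume w: "w \<in> W"
        have "w - (w \<bullet> g) *\<^sub>R g \<in> W'"
          unfolding W'_def using w gW W g1
          by (simp add: subspace_diff subspace_scale inner_diff_left dot_square_norm)
        then have "w - (w \<bullet> g) *\<^sub>R g \<in> span (insert g B')"
          using B'(4) span_mono[OF subset_insertI] by blast
        moreover have "(w \<bullet> g) *\<^sub>R g \<in> span (insert g B')"
          by (simp add: span_base span_mul)
        ultimately show "w \<in> span (insert g B')"
          using span_add by fastforce
      qed
    qed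
    ultimately show ?thesis
      using B' gW g1 g_eig \<open>W' \<subset> W\<close> by (intro exI[of _ "insert g B'"]) auto
  qed
qed

definition orthonormal_basis :: "'a::euclidean_space set \<Rightarrow> bool" where
  "orthonormal_basis B \<longleftrightarrow>
     finite B \<and> pairwise orthogonal B \<and> (\<forall>b\<in>B. norm b = 1) \<and> span B = UNIV"

lemma symmetric_orthonormal_eigenbasis:
  fixes A :: "real^'n^'n"
  assumes "transpose A = A"
  obtains B where "orthonormal_basis B" "\<And>b. b \<in> B \<Longrightarrow> A *v b = (b \<bullet> (A *v b)) *\<^sub>R b"
proof -
  obtain B where B: "pairwise orthogonal B" "\<forall>b\<in>B. norm b = 1" "span B = UNIV"
    "\<forall>b\<in>B. A *v b = (b \<bullet> (A *v b)) *\<^sub>R b"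
    using symmetric_orthonormal_eigenbasis_subspace[OF assms subspace_UNIV UNIV_I] by blast
  have "independent B"
    using B(1,2) pairwise_orthogonal_independent by fastforce
  then have "finite B"
    by (rule independent_imp_finite)
  with B show ?thesis
    using that unfolding orthonormal_basis_def by blast
qed

lemma inner_eq_sum_orthonormal_basis:
  fixes B :: "'a::euclidean_space set"
  assumes "orthonormal_basis B"
  shows "x \<bullet> y = (\<Sum>b\<in>B. (x \<bullet> b) * (y \<bullet> b))"
proof -
  have "(\<Sum>b\<in>B. (x \<bullet> b) *\<^sub>R b) = x"
    using assms orthonormal_basis_expand[of B x] unfolding orthonormal_basis_def by simp
  then have "x \<bullet> y = (\<Sum>b\<in>B. (x \<bullet> b) *\<^sub>R b) \<bullet> y"
    by simp
  also have "\<dots> = (\<Sum>b\<in>B. (x \<bullet> b) * (y \<bullet> b))"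
    unfolding inner_sum_left inner_scaleR_left by (simp add: inner_commute)
  finally show ?thesis .
qed

lemma inner_matrix_eq_sum_orthonormal_basis:
  fixes M N :: "real^'n^'n"
  assumes "orthonormal_basis B"
  shows "M \<bullet> N = (\<Sum>b\<in>B. \<Sum>c\<in>B. (b \<bullet> (M *v c)) * (b \<bullet> (N *v c)))"
proof -
  note parseval = inner_eq_sum_orthonormal_basis[OF assms]
  have "M \<bullet> N = (\<Sum>i\<in>UNIV. (M $ i) \<bullet> (N $ i))"
    by (simp add: inner_vec_def)
  also have "\<dots> = (\<Sum>i\<in>UNIV. \<Sum>c\<in>B. ((M $ i) \<bullet> c) * ((N $ i) \<bullet> c))"
    by (rule sum.cong[OF refl]) (rule parseval)
  also have "\<dots> = (\<Sum>c\<in>B. (M *v c) \<bullet> (N *v c))"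
    by (subst sum.swap) (simp add: inner_vec_def matrix_vector_mul_component)
  also have "\<dots> = (\<Sum>c\<in>B. \<Sum>b\<in>B. ((M *v c) \<bullet> b) * ((N *v c) \<bullet> b))"
    by (rule sum.cong[OF refl]) (rule parseval)
  finally show ?thesis
    by (subst (asm) sum.swap) (simp add: inner_commute)
qed

section \<open>The positive semidefinite cone\<close>

definition symmetric_matrices :: "(real^'n^'n) set" where
  "symmetric_matrices = {M. transpose M = M}"

definition psd_cone :: "(real^'n^'n) set" where
  "psd_cone = {M \<in> symmetric_matrices. \<forall>v. 0 \<le> v \<bullet> (M *v v)}"

lemma subspace_symmetric_matrices: "subspace symmetric_matrices"
  unfolding symmetric_matrices_def subspace_def by (auto simp: transpose_def vec_eq_iff)

lemma outer_prod_in_psd_cone: "outer_prod v \<in> psd_cone"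
  unfolding psd_cone_def symmetric_matrices_def
  by (simp add: transpose_outer_prod outer_prod_mult_vec inner_commute)

lemma
  shows closed_psd_cone: "closed psd_cone"
    and convex_psd_cone: "convex psd_cone"
    and cone_psd_cone: "cone psd_cone"
    and psd_cone_nonempty: "psd_cone \<noteq> {}"
proof -
  have "psd_cone = {M. (\<forall>i j. M $ i $ j = M $ j $ i) \<and> (\<forall>v. 0 \<le> M \<bullet> outer_prod v)}"
    unfolding psd_cone_def symmetric_matrices_def
    by (auto simp: inner_outer_prod vec_eq_iff transpose_def)
  also have "closed \<dots>"
    by (intro closed_Collect_all closed_Collect_eq closed_Collect_le closed_Collect_conj
        continuous_intros linear_continuous_on bounded_linear_vec_nth)
  finally show "closed psd_cone" .
  show "convex psd_cone"
    unfolding psd_cone_def symmetric_matrices_def convex_def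
    by (auto simp: transpose_def vec_eq_iff matrix_vector_mult_add_rdistrib
        scaleR_matrix_vector_assoc[symmetric] inner_add_right)
  show "cone psd_cone"
    unfolding psd_cone_def symmetric_matrices_def cone_def
    by (auto simp: transpose_def vec_eq_iff scaleR_matrix_vector_assoc[symmetric])
  show "psd_cone \<noteq> {}"
    using outer_prod_in_psd_cone by blast
qed

lemma dual_cone_psd_cone_subset: "dual_cone symmetric_matrices psd_cone \<subseteq> psd_cone"
  unfolding dual_cone_def using outer_prod_in_psd_cone
  by (fastforce simp: psd_cone_def inner_outer_prod)

lemma psd_cone_deflate:
  assumes Y: "Y \<in> psd_cone" and g: "norm g = 1" "Y *v g = \<mu> *\<^sub>R g"
  shows "Y - \<mu> *\<^sub>R outer_prod g \<in> psd_cone"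
proof -
  have Y_sym: "transpose Y = Y" and Y_psd: "\<And>v. 0 \<le> v \<bullet> (Y *v v)"
    using Y unfolding psd_cone_def symmetric_matrices_def by auto
  have deflated: "\<mu> * (g \<bullet> v) ^ 2 \<le> v \<bullet> (Y *v v)" for v
  proof -
    define t where "t = g \<bullet> v"
    define w where "w = v - t *\<^sub>R g"
    have wg: "w \<bullet> g = 0"
      using g(1) by (simp add: w_def t_def inner_diff_left inner_diff_right dot_square_norm inner_commute)
    have "v \<bullet> (Y *v v) = w \<bullet> (Y *v w) + 2 * (w \<bullet> (Y *v g)) * t + (g \<bullet> (Y *v g)) * t ^ 2"
      using quadratic_form_add_scaleR[OF Y_sym, of w t g] by (simp add: w_def)
    also have "\<dots> = w \<bullet> (Y *v w) + \<mu> * t ^ 2"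
      using g by (simp add: wg dot_square_norm)
    finally show ?thesis
      using Y_psd[of w] by (simp add: t_def)
  qed
  have "0 \<le> v \<bullet> ((Y - \<mu> *\<^sub>R outer_prod g) *v v)" for v
    using deflated[of v]
    by (simp add: matrix_vector_mult_diff_rdistrib inner_diff_right outer_prod_mult_vec
        scaleR_matrix_vector_assoc[symmetric] power2_eq_square inner_commute[of v g])
  moreover have "Y - \<mu> *\<^sub>R outer_prod g \<in> symmetric_matrices"
    using Y outer_prod_in_psd_cone[of g] unfolding psd_cone_def
    by (intro subspace_diff subspace_scale subspace_symmetric_matrices) auto
  ultimately show ?thesis
    unfolding psd_cone_def by blast
qed

text \<open>Deflating the top eigenvector g of the projection gives another point of the cone, and
  the variational inequality of the projection at that point bounds the top eigenvalue by
  g . X g.\<close>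
lemma psd_closest_point_form_le_onorm:
  fixes X :: "real^'n^'n"
  shows "v \<bullet> (closest_point psd_cone X *v v) \<le> onorm (\<lambda>v. X *v v) * norm v ^ 2"
proof -
  define Xp where "Xp = closest_point psd_cone X"
  note cone = closed_psd_cone convex_psd_cone cone_psd_cone psd_cone_nonempty
  have Xp: "Xp \<in> psd_cone"
    unfolding Xp_def by (rule closest_point_in_set[OF closed_psd_cone psd_cone_nonempty])
  then have Xp_sym: "transpose Xp = Xp"
    unfolding psd_cone_def symmetric_matrices_def by auto
  have "axis i (1::real) \<noteq> 0" for i :: 'n
    by (simp add: axis_eq_0_iff)
  then have "(UNIV :: (real^'n) set) \<noteq> {0}"
    by blast
  then obtain g where g: "norm g = 1" "Xp *v g = (g \<bullet> (Xp *v g)) *\<^sub>R g"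
    and top: "\<And>v. v \<bullet> (Xp *v v) \<le> (g \<bullet> (Xp *v g)) * norm v ^ 2"
    using symmetric_max_eigenvector[OF Xp_sym subspace_UNIV UNIV_I] by auto
  define \<mu> where "\<mu> = g \<bullet> (Xp *v g)"
  have "\<mu> \<le> onorm (\<lambda>v. X *v v)"
  proof (cases "\<mu> \<le> 0")
    case True
    then show ?thesis
      using onorm_pos_le[of "\<lambda>v. X *v v"] by simp
  next
    case False
    have "Xp - \<mu> *\<^sub>R outer_prod g \<in> psd_cone"
      using psd_cone_deflate[OF Xp g(1)] g(2) unfolding \<mu>_def by blast
    then have "inner (X - Xp) (Xp - \<mu> *\<^sub>R outer_prod g) \<le> 0"
      unfolding Xp_def by (rule closest_point_cone_polar[OF cone])
    moreover have "inner (X - Xp) Xp = 0"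
      unfolding Xp_def by (rule closest_point_cone_orthogonal[OF cone])
    ultimately have "0 \<le> \<mu> * (g \<bullet> ((X - Xp) *v g))"
      by (simp add: inner_diff_right inner_outer_prod)
    then have "\<mu> \<le> g \<bullet> (X *v g)"
      using False unfolding \<mu>_def
      by (simp add: zero_le_mult_iff matrix_vector_mult_diff_rdistrib inner_diff_right)
    also have "\<dots> \<le> norm g * norm (X *v g)"
      by (rule norm_cauchy_schwarz)
    also have "\<dots> \<le> onorm (\<lambda>v. X *v v)"
      using onorm[of "\<lambda>v. X *v v" g] g(1) by simp
    finally show ?thesis .
  qed
  then have "\<mu> * norm v ^ 2 \<le> onorm (\<lambda>v. X *v v) * norm v ^ 2"
    by (simp add: mult_right_mono)
  with top[of v] show ?thesis
    unfolding Xp_def \<mu>_def by linarith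
qed

lemma psd_norm_mult_vec_sq_le:
  assumes Y: "Y \<in> psd_cone" and bound: "\<And>v. v \<bullet> (Y *v v) \<le> M * norm v ^ 2" and "0 \<le> M"
  shows "norm (Y *v u) ^ 2 \<le> M * (u \<bullet> (Y *v u))"
proof -
  have Y_sym: "transpose Y = Y" and Y_psd: "\<And>v. 0 \<le> v \<bullet> (Y *v v)"
    using Y unfolding psd_cone_def symmetric_matrices_def by auto
  define y where "y = Y *v u"
  have "(norm y ^ 2) ^ 2 = (u \<bullet> (Y *v y)) ^ 2"
    using symmetric_inner_mult_vec[OF Y_sym, of u y] by (simp add: y_def dot_square_norm)
  also have "\<dots> \<le> (u \<bullet> (Y *v u)) * (y \<bullet> (Y *v y))"
    using psd_on_subspace_cauchy_schwarz[OF Y_sym subspace_UNIV Y_psd] by blast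
  also have "\<dots> \<le> (u \<bullet> (Y *v u)) * (M * norm y ^ 2)"
    using bound[of y] Y_psd[of u] by (rule mult_left_mono)
  finally have quartic: "norm y ^ 2 * norm y ^ 2 \<le> (M * (u \<bullet> (Y *v u))) * norm y ^ 2"
    by (simp add: power2_eq_square mult_ac)
  show ?thesis
  proof (cases "y = 0")
    case False
    then show ?thesis
      using mult_right_le_imp_le[OF quartic] by (simp add: y_def)
  qed (use Y_psd[of u] \<open>0 \<le> M\<close> in \<open>simp add: y_def\<close>)
qed

lemma
  fixes S :: "real^'n^'n"
  assumes S: "S \<in> psd_cone" "S \<noteq> 0"
    and B: "orthonormal_basis B"
    and eig: "\<And>b. b \<in> B \<Longrightarrow> S *v b = (b \<bullet> (S *v b)) *\<^sub>R b"
  shows min_nonzero_eigval_pos: "0 < Min {l. l \<noteq> 0 \<and> eigval S l}"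
    and min_nonzero_eigval_le:
      "\<And>b. b \<in> B \<Longrightarrow> b \<bullet> (S *v b) \<noteq> 0 \<Longrightarrow> Min {l. l \<noteq> 0 \<and> eigval S l} \<le> b \<bullet> (S *v b)"
proof -
  define L where "L = {l. l \<noteq> 0 \<and> eigval S l}"
  define lam where "lam b = b \<bullet> (S *v b)" for b
  have S_sym: "transpose S = S" and S_psd: "\<And>v. 0 \<le> v \<bullet> (S *v v)"
    using S(1) unfolding psd_cone_def symmetric_matrices_def by auto
  have lam_L: "lam b \<in> L" if "b \<in> B" "lam b \<noteq> 0" for b
    using eig[OF that(1)] B that unfolding L_def eigval_def lam_def orthonormal_basis_def
    by (intro CollectI conjI exI[of _ b]) auto
  have "L \<subseteq> lam ` B"
  proof
    fix l assume "l \<in> L"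
    then obtain v where "v \<noteq> 0" and Sv: "S *v v = l *\<^sub>R v"
      unfolding L_def eigval_def by auto
    have "\<exists>b\<in>B. v \<bullet> b \<noteq> 0"
    proof (rule ccontr)
      assume "\<not> ?thesis"
      then have "v \<bullet> v = 0"
        using inner_eq_sum_orthonormal_basis[OF B, of v v] by simp
      with \<open>v \<noteq> 0\<close> show False
        by simp
    qed
    then obtain b where b: "b \<in> B" "v \<bullet> b \<noteq> 0"
      by blast
    have "l * (v \<bullet> b) = (S *v v) \<bullet> b"
      using Sv by simp
    also have "\<dots> = v \<bullet> (S *v b)"
      using symmetric_inner_mult_vec[OF S_sym] by simp
    also have "\<dots> = lam b * (v \<bullet> b)"
      unfolding lam_def by (subst eig[OF b(1)]) simp
    finally have "l * (v \<bullet> b) = lam b * (v \<bullet> b)" .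
    with b show "l \<in> lam ` B"
      by simp
  qed
  then have "finite L"
    using B finite_surj unfolding orthonormal_basis_def by blast
  have "\<exists>b\<in>B. lam b \<noteq> 0"
  proof (rule ccontr)
    assume all_zero: "\<not> ?thesis"
    have "S *v x = 0" for x
    proof (rule linear_eq_0_on_span[OF matrix_vector_mul_linear])
      show "x \<in> span B"
        using B by (simp add: orthonormal_basis_def)
      show "S *v b = 0" if "b \<in> B" for b
        using eig[OF that] all_zero that by (simp add: lam_def)
    qed
    with S(2) show False
      by (simp add: matrix_eq)
  qed
  then have "L \<noteq> {}"
    using lam_L by blast
  then have "Min L \<in> L"
    using \<open>finite L\<close> by simp
  then obtain v where "v \<noteq> 0" "S *v v = Min L *\<^sub>R v" "Min L \<noteq> 0"
    unfolding L_def eigval_def by auto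
  moreover have "0 \<le> v \<bullet> (S *v v)"
    by (rule S_psd)
  ultimately have "0 \<le> Min L * (v \<bullet> v)" "0 < v \<bullet> v" "Min L \<noteq> 0"
    by simp_all
  then show "0 < Min L"
    by (auto simp: zero_le_mult_iff)
  show "Min L \<le> b \<bullet> (S *v b)" if "b \<in> B" "b \<bullet> (S *v b) \<noteq> 0" for b
    using lam_L[OF that[folded lam_def]] \<open>finite L\<close> by (simp add: lam_def)
qed

lemma inner_eq_sum_eigenvalues:
  fixes S M :: "real^'n^'n"
  assumes B: "orthonormal_basis B" and eig: "\<And>b. b \<in> B \<Longrightarrow> S *v b = (b \<bullet> (S *v b)) *\<^sub>R b"
  shows "S \<bullet> M = (\<Sum>b\<in>B. (b \<bullet> (S *v b)) * (b \<bullet> (M *v b)))"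
proof -
  have orth: "b \<bullet> c = (if b = c then 1 else 0)" if "b \<in> B" "c \<in> B" for b c
    using B that by (auto simp: orthonormal_basis_def pairwise_def orthogonal_def dot_square_norm)
  have "S \<bullet> M = (\<Sum>b\<in>B. \<Sum>c\<in>B. (b \<bullet> (S *v c)) * (b \<bullet> (M *v c)))"
    by (rule inner_matrix_eq_sum_orthonormal_basis[OF B])
  also have "\<dots> = (\<Sum>b\<in>B. \<Sum>c\<in>B. if c = b then (b \<bullet> (S *v b)) * (b \<bullet> (M *v b)) else 0)"
  proof (intro sum.cong refl)
    fix b c assume "b \<in> B" "c \<in> B"
    then show "(b \<bullet> (S *v c)) * (b \<bullet> (M *v c))
                 = (if c = b then (b \<bullet> (S *v b)) * (b \<bullet> (M *v b)) else 0)"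
      by (subst eig) (auto simp: orth)
  qed
  also have "\<dots> = (\<Sum>b\<in>B. (b \<bullet> (S *v b)) * (b \<bullet> (M *v b)))"
    using B by (simp add: orthonormal_basis_def)
  finally show ?thesis .
qed

text \<open>For a kernel vector v of S, outer_prod v is a point of the complementary face.\<close>
lemma proj_orth_compl_space_psd_kernel:
  fixes S Y :: "real^'n^'n"
  assumes "S *v b = 0" "S *v c = 0"
  shows "b \<bullet> (closest_point (orth_in symmetric_matrices (compl_space psd_cone S)) Y *v c) = 0"
proof -
  define p where "p = closest_point (orth_in symmetric_matrices (compl_space psd_cone S)) Y"
  have p: "p \<in> orth_in symmetric_matrices (compl_space psd_cone S)"
    unfolding p_def by (intro closest_point_subspace_mem subspace_orth_in subspace_symmetric_matrices)
  then have p_sym: "transpose p = p"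
    unfolding orth_in_def symmetric_matrices_def by auto
  have kernel_form: "v \<bullet> (p *v v) = 0" if "S *v v = 0" for v
  proof -
    have "outer_prod v \<in> compl_face psd_cone S"
      using outer_prod_in_psd_cone[of v] that
      unfolding compl_face_def by (simp add: inner_commute[of _ S] inner_outer_prod)
    then have "outer_prod v \<in> compl_space psd_cone S"
      unfolding compl_space_def by (rule hull_inc)
    with p have "p \<bullet> outer_prod v = 0"
      unfolding orth_in_def by blast
    then show ?thesis
      by (simp add: inner_outer_prod)
  qed
  have "S *v (b + 1 *\<^sub>R c) = 0"
    using assms by (simp add: matrix_vector_right_distrib)
  from kernel_form[OF this] show ?thesis
    unfolding quadratic_form_add_scaleR[OF p_sym] p_def[symmetric]
    using kernel_form[OF assms(1)] kernel_form[OF assms(2)] by simp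
qed

text \<open>P and Y will be the matrices of the projection and of X_+ in an eigenbasis of S, and Z
  will mark the kernel of S.\<close>
lemma sum_sq_le_off_block:
  fixes P Y :: "'b \<Rightarrow> 'b \<Rightarrow> real"
  assumes B: "finite B"
    and PY: "(\<Sum>b\<in>B. \<Sum>c\<in>B. P b c ^ 2) = (\<Sum>b\<in>B. \<Sum>c\<in>B. P b c * Y b c)"
    and P0: "\<And>b c. b \<in> B \<Longrightarrow> c \<in> B \<Longrightarrow> Z b \<Longrightarrow> Z c \<Longrightarrow> P b c = 0"
    and Y_sym: "\<And>b c. Y b c = Y c b"
    and row: "\<And>b. b \<in> B \<Longrightarrow> (\<Sum>c\<in>B. Y b c ^ 2) \<le> M * Y b b"
  shows "(\<Sum>b\<in>B. \<Sum>c\<in>B. P b c ^ 2) \<le> 2 * M * (\<Sum>b\<in>B. if Z b then 0 else Y b b)"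
proof -
  define Y' where "Y' b c = (if Z b \<and> Z c then 0 else Y b c)" for b c
  define sP where "sP = (\<Sum>(b, c)\<in>B \<times> B. P b c ^ 2)"
  define sY where "sY = (\<Sum>(b, c)\<in>B \<times> B. Y' b c ^ 2)"
  have "(\<Sum>b\<in>B. \<Sum>c\<in>B. P b c * Y b c) = (\<Sum>b\<in>B. \<Sum>c\<in>B. P b c * Y' b c)"
    by (intro sum.cong refl) (auto simp: Y'_def P0)
  then have "sP ^ 2 = (\<Sum>(b, c)\<in>B \<times> B. P b c * Y' b c) ^ 2"
    using PY by (simp add: sP_def sum.cartesian_product)
  also have "\<dots> \<le> sP * sY"
    unfolding sP_def sY_def using Cauchy_Schwarz_ineq_sum[of "case_prod P" "case_prod Y'" "B \<times> B"]
    by (simp add: case_prod_beta)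
  finally have "sP * sP \<le> sP * sY"
    by (simp add: power2_eq_square)
  moreover have "0 \<le> sP" "0 \<le> sY"
    unfolding sP_def sY_def by (auto intro: sum_nonneg)
  ultimately have "sP \<le> sY"
    by (cases "sP = 0") (simp_all add: mult_le_cancel_left)
  also have "sY \<le> (\<Sum>b\<in>B. \<Sum>c\<in>B. (if Z b then 0 else Y b c ^ 2) + (if Z c then 0 else Y b c ^ 2))"
    unfolding sY_def sum.cartesian_product[symmetric] case_prod_beta
    by (intro sum_mono) (auto simp: Y'_def)
  also have "\<dots> = 2 * (\<Sum>b\<in>B. if Z b then 0 else (\<Sum>c\<in>B. Y b c ^ 2))"
  proof -
    have "(\<Sum>b\<in>B. \<Sum>c\<in>B. if Z c then 0 else Y b c ^ 2) = (\<Sum>b\<in>B. \<Sum>c\<in>B. if Z b then 0 else Y b c ^ 2)"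
      by (subst sum.swap) (intro sum.cong refl, simp add: Y_sym)
    moreover have "(\<Sum>b\<in>B. \<Sum>c\<in>B. if Z b then 0 else Y b c ^ 2)
                     = (\<Sum>b\<in>B. if Z b then 0 else (\<Sum>c\<in>B. Y b c ^ 2))"
      by (intro sum.cong refl) simp
    ultimately show ?thesis
      by (simp add: sum.distrib)
  qed
  also have "\<dots> \<le> 2 * (\<Sum>b\<in>B. if Z b then 0 else M * Y b b)"
    using row by (intro mult_left_mono sum_mono) auto
  also have "\<dots> = 2 * M * (\<Sum>b\<in>B. if Z b then 0 else Y b b)"
    by (simp add: sum_distrib_left if_distrib[of "(*) M"] mult.assoc cong: if_cong)
  finally show ?thesis
    unfolding sP_def by (simp add: sum.cartesian_product)
qed

lemma norm_sq_proj_psd_le_off_kernel: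
  fixes S X :: "real^'n^'n"
  assumes B: "orthonormal_basis B" and eig: "\<And>b. b \<in> B \<Longrightarrow> S *v b = (b \<bullet> (S *v b)) *\<^sub>R b"
  defines "Xp \<equiv> closest_point psd_cone X"
  shows "norm (closest_point (orth_in symmetric_matrices (compl_space psd_cone S)) Xp) ^ 2
           \<le> 2 * onorm (\<lambda>v. X *v v) * (\<Sum>b\<in>B. if b \<bullet> (S *v b) = 0 then 0 else b \<bullet> (Xp *v b))"
proof -
  define p where "p = closest_point (orth_in symmetric_matrices (compl_space psd_cone S)) Xp"
  define Mx where "Mx = onorm (\<lambda>v. X *v v)"
  define P where "P b c = b \<bullet> (p *v c)" for b c
  define Y where "Y b c = b \<bullet> (Xp *v c)" for b c
  have Xp: "Xp \<in> psd_cone"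
    unfolding Xp_def by (rule closest_point_in_set[OF closed_psd_cone psd_cone_nonempty])
  then have Xp_sym: "transpose Xp = Xp"
    unfolding psd_cone_def symmetric_matrices_def by auto
  have "finite B"
    using B by (simp add: orthonormal_basis_def)
  have "norm p ^ 2 = (\<Sum>b\<in>B. \<Sum>c\<in>B. P b c ^ 2)"
    unfolding power2_norm_eq_inner inner_matrix_eq_sum_orthonormal_basis[OF B] P_def
    by (simp add: power2_eq_square)
  also have "\<dots> \<le> 2 * Mx * (\<Sum>b\<in>B. if b \<bullet> (S *v b) = 0 then 0 else Y b b)"
  proof (rule sum_sq_le_off_block[where P = P and Y = Y and Z = "\<lambda>b. b \<bullet> (S *v b) = 0",
        OF \<open>finite B\<close>])
    have "inner (Xp - p) p = 0"
      unfolding p_def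
      by (rule closest_point_subspace_orthogonal[OF subspace_orth_in[OF subspace_symmetric_matrices]])
    then have "p \<bullet> p = p \<bullet> Xp"
      by (simp add: inner_diff_left inner_diff_right inner_commute)
    then show "(\<Sum>b\<in>B. \<Sum>c\<in>B. P b c ^ 2) = (\<Sum>b\<in>B. \<Sum>c\<in>B. P b c * Y b c)"
      unfolding inner_matrix_eq_sum_orthonormal_basis[OF B] P_def Y_def
      by (simp add: power2_eq_square)
    show "P b c = 0" if "b \<in> B" "c \<in> B" "b \<bullet> (S *v b) = 0" "c \<bullet> (S *v c) = 0" for b c
    proof -
      have "S *v b = 0" "S *v c = 0"
        using eig[OF that(1)] eig[OF that(2)] that(3,4) by simp_all
      then show ?thesis
        unfolding P_def p_def by (rule proj_orth_compl_space_psd_kernel)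
    qed
    show "Y b c = Y c b" for b c
      unfolding Y_def using symmetric_inner_mult_vec[OF Xp_sym, of b c] by (simp add: inner_commute)
    show "(\<Sum>c\<in>B. Y b c ^ 2) \<le> Mx * Y b b" for b
    proof -
      have "(\<Sum>c\<in>B. Y b c ^ 2) = (\<Sum>c\<in>B. ((Xp *v b) \<bullet> c) * ((Xp *v b) \<bullet> c))"
        unfolding Y_def power2_eq_square symmetric_inner_mult_vec[OF Xp_sym] ..
      also have "\<dots> = norm (Xp *v b) ^ 2"
        unfolding power2_norm_eq_inner by (rule inner_eq_sum_orthonormal_basis[OF B, symmetric])
      also have "\<dots> \<le> Mx * Y b b"
        unfolding Y_def Mx_def
        by (rule psd_norm_mult_vec_sq_le[OF Xp psd_closest_point_form_le_onorm[of _ X, folded Xp_def]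
              onorm_pos_le[OF matrix_vector_mul_bounded_linear]])
      finally show ?thesis .
    qed
  qed
  finally show ?thesis
    unfolding p_def Mx_def Y_def .
qed

lemma min_nonzero_eigval_mult_le_inner:
  fixes S M :: "real^'n^'n"
  assumes S: "S \<in> psd_cone" "S \<noteq> 0" and M: "M \<in> psd_cone"
    and B: "orthonormal_basis B" and eig: "\<And>b. b \<in> B \<Longrightarrow> S *v b = (b \<bullet> (S *v b)) *\<^sub>R b"
  shows "Min {l. l \<noteq> 0 \<and> eigval S l} * (\<Sum>b\<in>B. if b \<bullet> (S *v b) = 0 then 0 else b \<bullet> (M *v b))
           \<le> S \<bullet> M"
proof -
  define T where "T = Min {l. l \<noteq> 0 \<and> eigval S l}"
  have M_diag: "0 \<le> b \<bullet> (M *v b)" for b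
    using M unfolding psd_cone_def by auto
  have "T * (\<Sum>b\<in>B. if b \<bullet> (S *v b) = 0 then 0 else b \<bullet> (M *v b))
          = (\<Sum>b\<in>B. if b \<bullet> (S *v b) = 0 then 0 else T * (b \<bullet> (M *v b)))"
    by (simp add: sum_distrib_left if_distrib[of "(*) T"] cong: if_cong)
  also have "\<dots> \<le> (\<Sum>b\<in>B. (b \<bullet> (S *v b)) * (b \<bullet> (M *v b)))"
  proof (rule sum_mono)
    fix b assume "b \<in> B"
    then show "(if b \<bullet> (S *v b) = 0 then 0 else T * (b \<bullet> (M *v b))) \<le> (b \<bullet> (S *v b)) * (b \<bullet> (M *v b))"
      using min_nonzero_eigval_le[OF S B eig, of b] M_diag[of b]
      by (auto simp: T_def intro: mult_right_mono)
  qed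
  also have "\<dots> = S \<bullet> M"
    by (rule inner_eq_sum_eigenvalues[OF B eig, symmetric])
  finally show ?thesis
    unfolding T_def .
qed

lemma norm_proj_orth_compl_space_psd_le:
  fixes S X :: "real^'n^'n"
  assumes S: "S \<in> dual_cone symmetric_matrices psd_cone" "S \<noteq> 0"
  defines "Xp \<equiv> closest_point psd_cone X" and "T \<equiv> Min {l. l \<noteq> 0 \<and> eigval S l}"
  shows "norm (closest_point (orth_in symmetric_matrices (compl_space psd_cone S)) Xp)
           \<le> inner S Xp / T + sqrt (2 * (inner S Xp / T) * onorm (\<lambda>v. X *v v))"
proof -
  define p where "p = closest_point (orth_in symmetric_matrices (compl_space psd_cone S)) Xp"
  define Mx where "Mx = onorm (\<lambda>v. X *v v)"
  have S_psd: "S \<in> psd_cone"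
    using S(1) dual_cone_psd_cone_subset by blast
  then obtain B where B: "orthonormal_basis B"
    and eig: "\<And>b. b \<in> B \<Longrightarrow> S *v b = (b \<bullet> (S *v b)) *\<^sub>R b"
    using symmetric_orthonormal_eigenbasis unfolding psd_cone_def symmetric_matrices_def by blast
  define a where "a = (\<Sum>b\<in>B. if b \<bullet> (S *v b) = 0 then 0 else b \<bullet> (Xp *v b))"
  have Xp: "Xp \<in> psd_cone"
    unfolding Xp_def by (rule closest_point_in_set[OF closed_psd_cone psd_cone_nonempty])
  have "0 \<le> Mx"
    unfolding Mx_def by (rule onorm_pos_le[OF matrix_vector_mul_bounded_linear])
  have "0 \<le> a"
    unfolding a_def using Xp by (auto simp: psd_cone_def intro: sum_nonneg)
  have "T * a \<le> inner S Xp" and "0 < T"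
    unfolding T_def a_def
    using min_nonzero_eigval_mult_le_inner[OF S_psd S(2) Xp B eig] min_nonzero_eigval_pos[OF S_psd S(2) B eig]
    by simp_all
  then have "a \<le> inner S Xp / T"
    by (simp add: field_simps mult.commute)
  have "norm p ^ 2 \<le> 2 * Mx * a"
    unfolding p_def Mx_def a_def Xp_def by (rule norm_sq_proj_psd_le_off_kernel[OF B eig])
  also have "\<dots> \<le> 2 * (inner S Xp / T) * Mx"
    using mult_left_mono[OF \<open>a \<le> inner S Xp / T\<close>, of "2 * Mx"] \<open>0 \<le> Mx\<close> by (simp add: mult_ac)
  finally have "norm p \<le> sqrt (2 * (inner S Xp / T) * Mx)"
    by (simp add: real_le_rsqrt)
  with \<open>0 \<le> a\<close> \<open>a \<le> inner S Xp / T\<close> show ?thesis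
    unfolding p_def Mx_def by simp
qed

theorem lemma3:
  shows
  "(\<forall>(E::'a::euclidean_space set) K (A::'a \<Rightarrow> 'f::euclidean_space) b c ystar x.
      conic_setting E K A b c ystar \<and> x \<in> E \<and> c - adjE E A ystar = 0 \<longrightarrow>
      norm (closest_point (orth_in E (compl_space K (c - adjE E A ystar))) (closest_point K x)) = 0)
 \<and> (\<forall>(E::'a::euclidean_space set) K (A::'a \<Rightarrow> 'f::euclidean_space) b c ystar x.
      conic_setting E K A b c ystar \<and> x \<in> E \<and> c - adjE E A ystar \<in> int_in E (dual_cone E K) \<longrightarrow>
      (let s = c - adjE E A ystar; xp = closest_point K x;
           Q = {1 / inner s (z /\<^sub>R norm z) | z. z \<in> K - {0}}
       in bdd_above Q
          \<and> norm (closest_point (orth_in E (compl_space K s)) xp) = norm xp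
          \<and> norm xp \<le> Sup Q * inner s xp))
 \<and> (\<forall>(A::real^'n \<Rightarrow> 'f) b c ystar x.
      let K = {v::real^'n. \<forall>i. 0 \<le> v $ i}; s = c - adjE UNIV A ystar in
      conic_setting UNIV K A b c ystar \<and> s \<in> bd_in UNIV (dual_cone UNIV K) \<and> s \<noteq> 0 \<longrightarrow>
      norm (closest_point (orth_in UNIV (compl_space K s)) (closest_point K x))
        \<le> (1 / Min {s $ i | i. s $ i \<noteq> 0}) * inner s (closest_point K x))
 \<and> (\<forall>(A::(real^'n) \<times> real \<Rightarrow> 'f) b c ystar x.
      let K = {(u::real^'n, t::real). norm u \<le> t}; s = c - adjE UNIV A ystar in
      conic_setting UNIV K A b c ystar \<and> s \<in> bd_in UNIV (dual_cone UNIV K) \<and> s \<noteq> 0 \<longrightarrow>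
      norm (closest_point (orth_in UNIV (compl_space K s)) (closest_point K x))
        \<le> sqrt (2 * sqrt 2 * (norm x * inner s (closest_point K x)) / norm s))
 \<and> (\<forall>(A::real^'n^'n \<Rightarrow> 'f) b c ystar X.
      let E = {M::real^'n^'n. transpose M = M};
          K = {M \<in> E. \<forall>v. 0 \<le> v \<bullet> (M *v v)};
          S = c - adjE E A ystar;
          Xp = closest_point K X;
          ep = inner S Xp;
          T = Min {l. l \<noteq> 0 \<and> eigval S l} in
      conic_setting E K A b c ystar \<and> X \<in> E \<and> S \<in> bd_in E (dual_cone E K) \<and> S \<noteq> 0 \<longrightarrow>
      norm (closest_point (orth_in E (compl_space K S)) Xp)
        \<le> ep / T + sqrt (2 * (ep / T) * onorm (\<lambda>v. X *v v)))"
proof ((intro conjI allI impI; (unfold Let_def)?; (intro impI)?), goal_cases)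
  case (1 E K A b c ystar x)
  then have cs: "conic_setting E K A b c ystar" and s: "c - adjE E A ystar = 0"
    by blast+
  show ?case
    unfolding s
    by (rule norm_proj_orth_compl_space_zero_slack[OF conic_setting_subspace[OF cs]
          conic_setting_closest_point_mem[OF cs]])
next
  case (2 E K A b c ystar x)
  then have cs: "conic_setting E K A b c ystar"
    and s: "c - adjE E A ystar \<in> int_in E (dual_cone E K)"
    by simp_all
  note E = conic_setting_subspace[OF cs]
  note K = proper_cone_subset[OF conic_setting_proper_cone[OF cs]]
  note xp = conic_setting_closest_point_mem[OF cs, of x]
  show ?case
    using int_dual_cone_norm_le_Sup[OF E K s] norm_proj_orth_compl_space_int_dual_cone[OF E K s xp] xp
    by blast
next
  case (3 A b c ystar x)
  then have cs: "conic_setting UNIV nonneg_orthant A b c ystar" and s: "c - adjE UNIV A ystar \<noteq> 0"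
    unfolding nonneg_orthant_def by simp_all
  show ?case
    using norm_proj_orth_compl_space_orthant_le[OF conic_setting_slack_in_dual_cone[OF cs] s
        conic_setting_closest_point_mem[OF cs]]
    unfolding nonneg_orthant_def .
next
  case (4 A b c ystar x)
  then have cs: "conic_setting UNIV second_order_cone A b c ystar"
    and s: "c - adjE UNIV A ystar \<notin> int_in UNIV (dual_cone UNIV second_order_cone)"
      "c - adjE UNIV A ystar \<noteq> 0"
    unfolding second_order_cone_def bd_in_def by simp_all
  show ?case
    using norm_proj_orth_compl_space_soc_le[OF conic_setting_slack_in_dual_cone[OF cs] s
        conic_setting_closest_point_mem[OF cs] conic_setting_norm_closest_point_le[OF cs]]
    unfolding second_order_cone_def .
next
  case (5 A b c ystar X)
  then have cs: "conic_setting symmetric_matrices psd_cone A b c ystar"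
    and s: "c - adjE symmetric_matrices A ystar \<noteq> 0"
    unfolding psd_cone_def symmetric_matrices_def by simp_all
  show ?case
    using norm_proj_orth_compl_space_psd_le[OF conic_setting_slack_in_dual_cone[OF cs] s]
    unfolding psd_cone_def symmetric_matrices_def .
qed

end
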